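(* Let $h : \mathbb{R}^n \to \mathbb{R}$, let $l, u \in \mathbb{R}^n$ with $l \le u$, and let $S = \{x \in [l,u] : h(x) \le 0\}$. Let $\bar x \in [l,u]$ with $h(\bar x) > 0$, and let $h_{ave} : \mathbb{R}^n \to \mathbb{R}$ be a differentiable concave underestimator of $h$ at $\bar x$. Define \[ \hat h(x) = \min \{ h_{ave}(z) + \nabla h_{ave}(z)^{\mathsf T}(x - z) : z \in [l,u],\ h_{ave}(z) \ge 0 \}. \] Then the set $C = \{x \in \mathbb{R}^n : \hat h(x) \ge 0\}$ is a convex $S$-free set, and $C \supseteq \{x \in \mathbb{R}^n : h_{ave}(x) \ge 0\}$.
   Context: A function $h_{ave} : \mathbb{R}^n \to \mathbb{R}$ is a concave underestimator of $h$ at $\bar x$ if $h_{ave}$ is concave, $h_{ave}(x) \le h(x)$ for all $x \in \mathbb{R}^n$, and $h_{ave}(\bar x) = h(\bar x)$. Here $[l,u] = \{x \in \mathbb{R}^n : l_i \le x_i \le u_i \text{ for all } i\}$. A set $C$ is $S$-free if it is convex and contains no point of $S$ in its interior. *)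

theory Defs
  imports "HOL-Analysis.Analysis"
begin

definition boxset :: "real^'n \<Rightarrow> real^'n \<Rightarrow> (real^'n) set" where
  "boxset l u = {x. \<forall>i. l $ i \<le> x $ i \<and> x $ i \<le> u $ i}"

definition concave_underestimator ::
  "(real^'n \<Rightarrow> real) \<Rightarrow> (real^'n \<Rightarrow> real) \<Rightarrow> real^'n \<Rightarrow> bool" where
  "concave_underestimator hav h xbar \<longleftrightarrow>
     concave_on UNIV hav \<and> (\<forall>x. hav x \<le> h x) \<and> hav xbar = h xbar"

definition S_free :: "(real^'n) set \<Rightarrow> (real^'n) set \<Rightarrow> bool" where
  "S_free S C \<longleftrightarrow> convex C \<and> (\<forall>x\<in>S. x \<notin> interior C)"

end

theory Submission
  imports Defs
begin

text \<open>
  A concave differentiable function lies below each of its tangent planes, so every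
  tangent cut 0 \<le> hav z + grad z \<bullet> (x - z) contains the superlevel set of hav at 0,
  and the intersection C of these halfspaces is convex. If a point x of the box had
  h x \<le> 0, then hav x \<le> 0 < hav xbar, so the segment from x to xbar, which stays in
  the box, contains a zero z of hav. The tangent at z increases towards xbar, hence is
  nonpositive at x: thus x lies outside the open halfspace of the cut at z and is not
  interior to C.
\<close>

lemma concave_on_along_line:
  fixes f :: "'a::real_vector \<Rightarrow> real"
  assumes "concave_on UNIV f"
  shows "concave_on UNIV (\<lambda>t::real. f (z + t *\<^sub>R v))"
proof -
  have "z + (s * a + t * b) *\<^sub>R v = s *\<^sub>R (z + a *\<^sub>R v) + t *\<^sub>R (z + b *\<^sub>R v)"
    if "s + t = 1" for s t a b :: real
    using that by (simp add: algebra_simps flip: scaleR_add_left)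
  with assms show ?thesis
    by (auto simp: concave_on_iff)
qed

lemma concave_on_le_tangent:
  fixes f :: "'a::real_normed_vector \<Rightarrow> real"
  assumes concave: "concave_on UNIV f" and deriv: "(f has_derivative D) (at z)"
  shows "f y \<le> f z + D (y - z)"
proof -
  define p where "p t = - f (z + t *\<^sub>R (y - z))" for t :: real
  have "convex_on UNIV p"
    using concave_on_along_line[OF concave] by (simp add: p_def convex_on_iff_concave)
  have "((\<lambda>t. z + t *\<^sub>R (y - z)) has_derivative (\<lambda>t. t *\<^sub>R (y - z))) (at 0)"
    by (auto intro!: derivative_eq_intros)
  from has_derivative_compose[OF this, of f D] deriv
  have "(p has_derivative (\<lambda>t. - D (t *\<^sub>R (y - z)))) (at 0)"
    unfolding p_def by (auto intro: has_derivative_minus)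
  moreover have "(\<lambda>t. - D (t *\<^sub>R (y - z))) = (*) (- D (y - z))"
    using linear_cmul[OF has_derivative_linear[OF deriv]] by (auto simp: fun_eq_iff)
  ultimately have "(p has_field_derivative - D (y - z)) (at 0 within UNIV)"
    by (simp add: has_field_derivative_def)
  from convex_on_imp_above_tangent[OF \<open>convex_on UNIV p\<close> _ _ _ this, of 1]
  show ?thesis by (simp add: p_def)
qed

lemma segment_zero_crossing:
  fixes f :: "'a::real_normed_vector \<Rightarrow> real"
  assumes "continuous_on (closed_segment a b) f" and "f a \<le> 0" and "0 \<le> f b"
  obtains z where "z \<in> closed_segment a b" and "f z = 0"
proof -
  have "connected (f ` closed_segment a b)"
    using assms(1) by (rule connected_continuous_image) simp
  then have "{f a..f b} \<subseteq> f ` closed_segment a b"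
    by (rule connected_contains_Icc) auto
  with assms(2,3) that show ?thesis by auto
qed

definition tangent_cut_set :: "('a::real_inner \<Rightarrow> real) \<Rightarrow> ('a \<Rightarrow> 'a) \<Rightarrow> 'a set \<Rightarrow> 'a set" where
  "tangent_cut_set f g K = (\<Inter>z\<in>{z\<in>K. 0 \<le> f z}. {x. 0 \<le> f z + g z \<bullet> (x - z)})"

lemma convex_tangent_cut_set: "convex (tangent_cut_set f g K)"
proof -
  have "{x. 0 \<le> f z + g z \<bullet> (x - z)} = {x. g z \<bullet> x \<ge> g z \<bullet> z - f z}" for z
    by (auto simp: inner_diff_right)
  then show ?thesis
    unfolding tangent_cut_set_def by (auto intro!: convex_INT simp: convex_halfspace_ge)
qed

context
  fixes f :: "'a::real_inner \<Rightarrow> real" and g :: "'a \<Rightarrow> 'a"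
  assumes concave: "concave_on UNIV f"
    and gradient: "\<And>z. (f has_derivative (\<lambda>v. g z \<bullet> v)) (at z)"
begin

lemma superlevel_subset_tangent_cut_set: "{x. 0 \<le> f x} \<subseteq> tangent_cut_set f g K"
  unfolding tangent_cut_set_def
  using concave_on_le_tangent[OF concave gradient] order_trans by blast

lemma tangent_cut_set_eq_Inf:
  assumes "\<exists>z\<in>K. 0 \<le> f z"
  shows "tangent_cut_set f g K = {x. 0 \<le> Inf {f z + g z \<bullet> (x - z) | z. z \<in> K \<and> 0 \<le> f z}}"
proof -
  have "0 \<le> Inf {f z + g z \<bullet> (x - z) | z. z \<in> K \<and> 0 \<le> f z}
      \<longleftrightarrow> (\<forall>z\<in>K. 0 \<le> f z \<longrightarrow> 0 \<le> f z + g z \<bullet> (x - z))" for x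
  proof (subst le_cInf_iff)
    show "bdd_below {f z + g z \<bullet> (x - z) | z. z \<in> K \<and> 0 \<le> f z}"
      using concave_on_le_tangent[OF concave gradient, of x] by (force simp: bdd_below_def)
  qed (use assms in auto)
  then show ?thesis
    unfolding tangent_cut_set_def by auto
qed

lemma not_in_interior_tangent_cut_set:
  assumes "convex K" and "w \<in> K" and "0 < f w" and "x \<in> K" and "f x \<le> 0"
  shows "x \<notin> interior (tangent_cut_set f g K)"
proof -
  have "continuous_on (closed_segment x w) f"
    using gradient has_derivative_continuous continuous_at_imp_continuous_on by blast
  then obtain z where z_seg: "z \<in> closed_segment x w" and "f z = 0"
    using segment_zero_crossing assms(3,5) by (metis less_imp_le)
  then obtain s where "0 \<le> s" and "s \<le> 1" and z_eq: "z = (1 - s) *\<^sub>R x + s *\<^sub>R w"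
    by (auto simp: in_segment)
  have "z \<in> K"
    using closed_segment_subset[OF assms(4,2,1)] z_seg by blast
  have "f w \<le> f z + g z \<bullet> (w - z)"
    by (rule concave_on_le_tangent[OF concave gradient])
  with \<open>f z = 0\<close> assms(3) have ascent: "0 < g z \<bullet> (w - z)"
    by simp
  have "s \<noteq> 1"
    using z_eq \<open>f z = 0\<close> assms(3) by auto
  have "(1 - s) *\<^sub>R (x - z) = - s *\<^sub>R (w - z)"
    unfolding z_eq by (simp add: algebra_simps)
  then have "(1 - s) * (g z \<bullet> (x - z)) = - s * (g z \<bullet> (w - z))"
    by (metis inner_scaleR_right)
  also have "\<dots> \<le> 0"
    using \<open>0 \<le> s\<close> ascent by simp
  finally have "g z \<bullet> (x - z) \<le> 0"
    using \<open>s \<le> 1\<close> \<open>s \<noteq> 1\<close> by (simp add: mult_le_0_iff)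
  then have "g z \<bullet> x \<le> g z \<bullet> z"
    by (simp add: inner_diff_right)
  have "tangent_cut_set f g K \<subseteq> {y. g z \<bullet> y \<ge> g z \<bullet> z}"
    using \<open>z \<in> K\<close> \<open>f z = 0\<close> unfolding tangent_cut_set_def inner_diff_right by force
  then have "interior (tangent_cut_set f g K) \<subseteq> interior {y. g z \<bullet> y \<ge> g z \<bullet> z}"
    by (rule interior_mono)
  also have "\<dots> = {y. g z \<bullet> y > g z \<bullet> z}"
    using ascent by (intro interior_halfspace_ge) auto
  finally show ?thesis
    using \<open>g z \<bullet> x \<le> g z \<bullet> z\<close> by auto
qed

end

lemma convex_boxset: "convex (boxset l u)"
  unfolding boxset_def
proof (rule convex_box_cart)
  fix i
  have "{x. l $ i \<le> x \<and> x \<le> u $ i} = {l $ i..u $ i}"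
    by auto
  then show "convex {x. l $ i \<le> x \<and> x \<le> u $ i}"
    by simp
qed

theorem proposition1:
  fixes h hav :: "real^'n \<Rightarrow> real"
    and grad :: "real^'n \<Rightarrow> real^'n"
    and l u xbar :: "real^'n"
  assumes lu: "\<forall>i. l $ i \<le> u $ i"
    and xbar_box: "xbar \<in> boxset l u"
    and hxbar: "h xbar > 0"
    and under: "concave_underestimator hav h xbar"
    and grad: "\<And>z. (hav has_derivative (\<lambda>v. grad z \<bullet> v)) (at z)"
  shows "S_free {x \<in> boxset l u. h x \<le> 0}
           {x. Inf {hav z + grad z \<bullet> (x - z) | z. z \<in> boxset l u \<and> hav z \<ge> 0} \<ge> 0}
       \<and> {x. hav x \<ge> 0} \<subseteq>
           {x. Inf {hav z + grad z \<bullet> (x - z) | z. z \<in> boxset l u \<and> hav z \<ge> 0} \<ge> 0}"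
proof -
  have concave: "concave_on UNIV hav" and below: "\<And>x. hav x \<le> h x" and touch: "hav xbar = h xbar"
    using under unfolding concave_underestimator_def by auto
  let ?C = "tangent_cut_set hav grad (boxset l u)"
  have C_eq: "?C = {x. Inf {hav z + grad z \<bullet> (x - z) | z. z \<in> boxset l u \<and> hav z \<ge> 0} \<ge> 0}"
    using tangent_cut_set_eq_Inf[OF concave grad] xbar_box hxbar touch by force
  have "\<forall>x \<in> {x \<in> boxset l u. h x \<le> 0}. x \<notin> interior ?C"
    using not_in_interior_tangent_cut_set[OF concave grad convex_boxset xbar_box] below hxbar touch
    by (metis mem_Collect_eq order_trans)
  then have "S_free {x \<in> boxset l u. h x \<le> 0} ?C"
    unfolding S_free_def using convex_tangent_cut_set by blast
  moreover have "{x. hav x \<ge> 0} \<subseteq> ?C"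
    by (rule superlevel_subset_tangent_cut_set[OF concave grad])
  ultimately show ?thesis
    by (simp add: C_eq)
qed

end
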